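(* Let $A$ be a metrizable abelian topological group and $D\le A$ a dense subgroup. Then the restriction map $\hat A\to\hat D$, $\chi\mapsto\chi|_D$, is an isomorphism of topological groups.
   Context: $\mathbb{T}=\mathbb{R}/\mathbb{Z}$. For an abelian topological group $B$, $\hat B$ is the group of continuous homomorphisms $B\to\mathbb{T}$ with the compact-open topology. *)

theory Defs
  imports "HOL-Analysis.Analysis" "HOL-Algebra.Algebra"
begin

text \<open>The circle group T = R/Z, realised (as a topological group) as the unit circle
  in the complex plane under multiplication, via t mod 1 maps to exp(2 pi i t).\<close>
abbreviation circle_top :: "complex topology" where
  "circle_top \<equiv> top_of_set (sphere 0 1)"

definition topological_comm_group :: "'a topology \<Rightarrow> ('a, 'b) monoid_scheme \<Rightarrow> bool" where
  "topological_comm_group S G \<longleftrightarrow>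
     comm_group G \<and> topspace S = carrier G \<and>
     continuous_map (prod_topology S S) S (\<lambda>(x, y). mult G x y) \<and>
     continuous_map S S (\<lambda>x. m_inv G x)"

definition characters :: "'a topology \<Rightarrow> ('a, 'b) monoid_scheme \<Rightarrow> ('a \<Rightarrow> complex) set" where
  "characters S G = {\<phi>. continuous_map S circle_top \<phi> \<and>
      (\<forall>x\<in>carrier G. \<forall>y\<in>carrier G. \<phi> (mult G x y) = \<phi> x * \<phi> y) \<and>
      (\<forall>x. x \<notin> topspace S \<longrightarrow> \<phi> x = 1)}"

definition compact_open :: "'a topology \<Rightarrow> 'c topology \<Rightarrow> ('a \<Rightarrow> 'c) set \<Rightarrow> ('a \<Rightarrow> 'c) topology" where
  "compact_open S Y F = topology_generated_by
     {{f \<in> F. f ` K \<subseteq> U} | K U. compactin S K \<and> openin Y U}"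

text \<open>The dual group as a topological space (its group law is pointwise multiplication).\<close>
definition dual_top :: "'a topology \<Rightarrow> ('a, 'b) monoid_scheme \<Rightarrow> ('a \<Rightarrow> complex) topology" where
  "dual_top S G = compact_open S circle_top (characters S G)"

definition restrict_char :: "'a set \<Rightarrow> ('a \<Rightarrow> complex) \<Rightarrow> ('a \<Rightarrow> complex)" where
  "restrict_char D \<phi> = (\<lambda>x. if x \<in> D then \<phi> x else 1)"

end

theory Submission
  imports Defs
begin

text \<open>Restriction maps characters of A to characters of D, and it is a bijection because every
  character of D is uniformly continuous and therefore extends, by taking limits along D, to a
  character of A. Compact subsets of D are compact in A, so restriction is continuous; the point is
  the continuity of extension, i.e. that a compact K in A is controlled by a compact L in D.
  Writing A additively, a countable neighbourhood base at 0 (metrizability) yields finite nets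
  F k \<subseteq> D of K at finer and finer scales, so every x in K is the limit of a chain a k \<in> F k. The
  increments a (k+1) - a k of such chains, together with their first M k multiples, form finite sets
  shrinking to 0, and with F 0 and 0 they make up L. A character within \<delta> of 1 on L is within
  2 / M k of 1 on each increment, because its values on the multiples stay in the half plane
  Re > 0, and summing these bounds along the chain keeps it within \<epsilon> of 1 on K.\<close>

lemma norm_mult_minus_one_le:
  fixes z w :: complex
  assumes "cmod w = 1"
  shows "cmod (z * w - 1) \<le> cmod (z - 1) + cmod (w - 1)"
proof -
  have "z * w - 1 = (z - 1) * w + (w - 1)" by (simp add: algebra_simps)
  then have "cmod (z * w - 1) \<le> cmod ((z - 1) * w) + cmod (w - 1)"
    by (metis norm_triangle_ineq)
  then show ?thesis using assms by (simp add: norm_mult)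
qed

lemma norm_mult_cnj_minus_one:
  fixes z w :: complex
  assumes "cmod w = 1"
  shows "cmod (z * cnj w - 1) = cmod (z - w)"
proof -
  have "w * cnj w = 1" using assms by (simp add: complex_norm_square[symmetric])
  then have "z * cnj w - 1 = (z - w) * cnj w" by (simp add: algebra_simps)
  then show ?thesis using assms by (simp add: norm_mult)
qed

lemma norm_cis_minus_one_le: "cmod (cis t - 1) \<le> \<bar>t\<bar>"
  using dist_exp_i_1[of t] abs_sin_x_le_abs_x[of "t / 2"] by (simp add: cis_conv_exp)

text \<open>Otherwise the argument of some z^m with m \<le> M lies in [pi/2, 3pi/2], so that
  Re (z^m) \<le> 0 and z^m is at distance at least 1 from 1.\<close>
lemma norm_minus_one_lt_if_powers_near_one:
  fixes z :: complex
  assumes z: "cmod z = 1" and M: "M \<ge> 1" and near: "\<And>m. m \<in> {1..M} \<Longrightarrow> cmod (z ^ m - 1) < 1"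
  shows "cmod (z - 1) < 2 / real M"
proof -
  define \<theta> where "\<theta> = Arg z"
  have "z \<noteq> 0" using z by auto
  then have zcis: "z = cis \<theta>" and \<theta>: "-pi < \<theta>" "\<theta> \<le> pi"
    using Arg_correct[of z] z by (auto simp: \<theta>_def sgn_div_norm)
  have small: "\<bar>\<theta>\<bar> < pi / (2 * real M)"
  proof (rule ccontr)
    assume "\<not> ?thesis"
    then have big: "pi / (2 * real M) \<le> \<bar>\<theta>\<bar>" by simp
    moreover have "pi / (2 * real M) > 0" using M by simp
    ultimately have t: "\<bar>\<theta>\<bar> > 0" by linarith
    define m where "m = nat \<lceil>pi / (2 * \<bar>\<theta>\<bar>)\<rceil>"
    have "real m = of_int \<lceil>pi / (2 * \<bar>\<theta>\<bar>)\<rceil>"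
      unfolding m_def using t by simp
    then have m_ge: "real m \<ge> pi / (2 * \<bar>\<theta>\<bar>)" and m_lt: "real m < pi / (2 * \<bar>\<theta>\<bar>) + 1"
      using ceiling_correct[of "pi / (2 * \<bar>\<theta>\<bar>)"] by linarith+
    have "pi / (2 * \<bar>\<theta>\<bar>) \<le> real M"
      using big M t by (simp add: field_simps)
    then have "m \<le> M" unfolding m_def by (simp add: nat_le_iff ceiling_le_iff)
    moreover have "pi / (2 * \<bar>\<theta>\<bar>) > 0" using t by simp
    then have "real m > 0" using m_ge by linarith
    ultimately have "m \<in> {1..M}" by simp
    have lo: "pi / 2 \<le> real m * \<bar>\<theta>\<bar>" and hi: "real m * \<bar>\<theta>\<bar> \<le> 3 * pi / 2"
      using m_ge m_lt t \<theta> by (auto simp: field_simps)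
    have "cos (real m * \<bar>\<theta>\<bar>) = - sin (real m * \<bar>\<theta>\<bar> - pi / 2)" by (simp add: sin_diff)
    also have "\<dots> \<le> 0" using lo hi by (simp add: sin_ge_zero)
    finally have "cos (real m * \<theta>) \<le> 0"
      by (cases "\<theta> \<ge> 0") simp_all
    then have "Re (z ^ m) \<le> 0" unfolding zcis cos_n_Re_cis_pow_n .
    then have "1 \<le> cmod (z ^ m - 1)"
      using abs_Re_le_cmod[of "z ^ m - 1"] by simp
    with near \<open>m \<in> {1..M}\<close> show False by fastforce
  qed
  have "cmod (z - 1) \<le> \<bar>\<theta>\<bar>" unfolding zcis by (rule norm_cis_minus_one_le)
  also have "\<dots> < pi / (2 * real M)" by (rule small)
  also have "\<dots> < 2 / real M" using M pi_less_4 by (simp add: field_simps)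
  finally show ?thesis .
qed

lemma norm_minus_one_le_telescoping:
  fixes z u :: "nat \<Rightarrow> complex"
  assumes "\<And>k. cmod (z k) = 1" and "\<And>k. z (Suc k) = u k * z k"
  shows "cmod (z n - 1) \<le> cmod (z 0 - 1) + (\<Sum>k<n. cmod (u k - 1))"
proof (induction n)
  case (Suc n)
  have "cmod (z (Suc n) - 1) \<le> cmod (u n - 1) + cmod (z n - 1)"
    using assms norm_mult_minus_one_le by metis
  with Suc show ?case by simp
qed simp

lemma sum_div_two_power_le: "(\<Sum>k<n. c / 2 ^ (k + 3)) \<le> (c::real) / 4" if "c \<ge> 0"
proof -
  have "(\<Sum>k<n. c / 2 ^ (k + 3)) = c / 4 - c / 2 ^ (n + 2)"
    by (induction n) (simp_all add: field_simps power_add)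
  then show ?thesis using that by simp
qed

lemma ex_nat_two_div_le:
  assumes "(r::real) > 0"
  shows "\<exists>M::nat. M \<ge> 1 \<and> 2 / real M \<le> r"
proof -
  obtain n where n: "2 / r < real n" using reals_Archimedean2 by blast
  moreover have "0 < 2 / r" using assms by simp
  ultimately have pos: "0 < real n" by linarith
  have "2 < real n * r" using n assms by (simp add: field_simps)
  then have "2 / real n \<le> r" using pos by (simp add: field_simps)
  moreover have "n \<ge> 1" using pos by simp
  ultimately show ?thesis by blast
qed

section \<open>The compact-open topology\<close>

lemma topspace_compact_open [simp]: "topspace (compact_open T Y F) = F"
proof -
  have "{f \<in> F. f ` {} \<subseteq> {}} \<in> {{f \<in> F. f ` K \<subseteq> U} | K U. compactin T K \<and> openin Y U}"
    by blast
  then show ?thesis unfolding compact_open_def topology_generated_by_topspace by auto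
qed

lemma openin_compact_open_basic:
  assumes "compactin T K" "openin Y U"
  shows "openin (compact_open T Y F) {f \<in> F. f ` K \<subseteq> U}"
  unfolding compact_open_def by (rule topology_generated_by_Basis) (use assms in blast)

lemma continuous_map_compact_open_iff:
  "continuous_map Z (compact_open T Y F) h \<longleftrightarrow>
     h ` topspace Z \<subseteq> F \<and>
     (\<forall>K U. compactin T K \<longrightarrow> openin Y U \<longrightarrow> openin Z {z \<in> topspace Z. h z ` K \<subseteq> U})"
proof -
  let ?B = "{{f \<in> F. f ` K \<subseteq> U} | K U. compactin T K \<and> openin Y U}"
  have "\<Union>?B = F"
    using topspace_compact_open[of T Y F] unfolding compact_open_def by simp
  then have cont: "continuous_map Z (compact_open T Y F) h \<longleftrightarrow>
      h ` topspace Z \<subseteq> F \<and> (\<forall>W\<in>?B. openin Z (h -` W \<inter> topspace Z))"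
    unfolding compact_open_def continuous_on_generated_topo_iff by blast
  have ball: "(\<forall>W\<in>?B. openin Z (h -` W \<inter> topspace Z)) \<longleftrightarrow>
      (\<forall>K U. compactin T K \<longrightarrow> openin Y U \<longrightarrow> openin Z (h -` {f \<in> F. f ` K \<subseteq> U} \<inter> topspace Z))"
    by blast
  show ?thesis
  proof (cases "h ` topspace Z \<subseteq> F")
    case True
    then have "h -` {f \<in> F. f ` K \<subseteq> U} \<inter> topspace Z = {z \<in> topspace Z. h z ` K \<subseteq> U}" for K U
      by auto
    with True show ?thesis unfolding cont ball by simp
  qed (use cont in simp)
qed

text \<open>Cover L by finitely many sets on which g varies by less than \<delta>/4.\<close>
lemma compact_open_uniform_neighbourhood:
  fixes g :: "'a \<Rightarrow> 'b::metric_space"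
  assumes g: "g \<in> F" "continuous_map T (top_of_set A) g" and L: "compactin T L" and \<delta>: "\<delta> > 0"
  obtains N where "openin (compact_open T (top_of_set A) F) N" "g \<in> N"
    "\<And>f l. f \<in> N \<Longrightarrow> l \<in> L \<Longrightarrow> dist (f l) (g l) < \<delta>"
proof -
  define V where "V t = {y \<in> topspace T. g y \<in> A \<inter> ball (g t) (\<delta>/4)}" for t
  define K where "K t = {y \<in> topspace T. g y \<in> A \<inter> cball (g t) (\<delta>/4)} \<inter> L" for t
  define U where "U t = A \<inter> ball (g t) (\<delta>/2)" for t
  have "openin T (V t)" for t
    unfolding V_def by (rule openin_continuous_map_preimage[OF g(2)]) (simp add: openin_open_Int)
  moreover have "L \<subseteq> (\<Union>t\<in>L. V t)"
  proof
    fix l assume l: "l \<in> L"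
    then have "l \<in> topspace T" using L compactin_subset_topspace by blast
    moreover have "g ` topspace T \<subseteq> A"
      using g(2) by (simp add: continuous_map_in_subtopology image_subset_iff_funcset)
    ultimately have "l \<in> V l" using \<delta> by (auto simp: V_def)
    with l show "l \<in> (\<Union>t\<in>L. V t)" by blast
  qed
  ultimately obtain \<F> where \<F>: "finite \<F>" "\<F> \<subseteq> V ` L" "L \<subseteq> \<Union>\<F>"
    using L[unfolded compactin_def, THEN conjunct2, rule_format, of "V ` L"] by blast
  then obtain Q where Q: "finite Q" "Q \<subseteq> L" "L \<subseteq> (\<Union>t\<in>Q. V t)"
    using finite_subset_image[OF \<F>(1,2)] by blast
  have K: "compactin T (K t)" for t
    unfolding K_def using L
    by (intro closed_Int_compactin closedin_continuous_map_preimage[OF g(2)])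
      (simp add: closedin_closed_Int)
  define N where "N = (\<Inter>t\<in>Q. {f \<in> F. f ` K t \<subseteq> U t}) \<inter> F"
  show ?thesis
  proof
    have "openin (compact_open T (top_of_set A) F)
        ((\<Inter>t\<in>Q. {f \<in> F. f ` K t \<subseteq> U t}) \<inter> topspace (compact_open T (top_of_set A) F))"
      using Q(1) K
      by (intro openin_INT openin_compact_open_basic) (simp_all add: U_def openin_open_Int)
    then show "openin (compact_open T (top_of_set A) F) N" by (simp add: N_def)
    have "g ` K t \<subseteq> U t" for t
    proof
      fix z assume "z \<in> g ` K t"
      then have "z \<in> A" "dist (g t) z \<le> \<delta>/4" by (auto simp: K_def)
      with \<delta> show "z \<in> U t" by (simp add: U_def)
    qed
    with g(1) show "g \<in> N" by (simp add: N_def)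
  next
    fix f l assume f: "f \<in> N" and l: "l \<in> L"
    then obtain t where t: "t \<in> Q" "l \<in> V t" using Q(3) by blast
    then have "l \<in> K t" using l by (auto simp: V_def K_def)
    then have "f l \<in> U t" using f t(1) by (auto simp: N_def)
    then have "dist (g t) (f l) < \<delta>/2" by (simp add: U_def)
    moreover have "dist (g t) (g l) < \<delta>/4" using t(2) by (simp add: V_def)
    ultimately show "dist (f l) (g l) < \<delta>" using dist_triangle3[of "f l" "g l" "g t"] \<delta> by linarith
  qed
qed

section \<open>Compactness and limits along a dense set\<close>

lemma compactin_insert_UN_shrinking:
  fixes P :: "nat \<Rightarrow> 'a set"
  assumes fin: "\<And>k. finite (P k)" and P: "\<And>k. P k \<subseteq> topspace T" and e: "e \<in> topspace T"
    and shrink: "\<And>U. openin T U \<Longrightarrow> e \<in> U \<Longrightarrow> \<exists>N. \<forall>k\<ge>N. P k \<subseteq> U"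
  shows "compactin T (insert e (\<Union>k. P k))"
  unfolding compactin_def
proof (intro conjI allI impI)
  show "insert e (\<Union>k. P k) \<subseteq> topspace T" using P e by blast
  fix \<U> assume \<U>: "(\<forall>U\<in>\<U>. openin T U) \<and> insert e (\<Union>k. P k) \<subseteq> \<Union>\<U>"
  then obtain U0 where U0: "U0 \<in> \<U>" "e \<in> U0" by auto
  moreover have "openin T U0" using \<U> U0 by blast
  ultimately obtain N where N: "\<forall>k\<ge>N. P k \<subseteq> U0" using shrink by blast
  have "finite (\<Union>k<N. P k)" by (simp add: fin)
  then have "compactin T (\<Union>k<N. P k)" using P by (intro finite_imp_compactin) auto
  moreover have "(\<forall>U\<in>\<U>. openin T U) \<and> (\<Union>k<N. P k) \<subseteq> \<Union>\<U>" using \<U> by blast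
  ultimately obtain \<F> where \<F>: "finite \<F>" "\<F> \<subseteq> \<U>" "(\<Union>k<N. P k) \<subseteq> \<Union>\<F>"
    unfolding compactin_def by meson
  have "P k \<subseteq> \<Union>(insert U0 \<F>)" for k
    using N \<F>(3) by (cases "k < N") (auto simp: not_less)
  then have "insert e (\<Union>k. P k) \<subseteq> \<Union>(insert U0 \<F>)" using U0 by blast
  with \<F> U0 show "\<exists>\<F>. finite \<F> \<and> \<F> \<subseteq> \<U> \<and> insert e (\<Union>k. P k) \<subseteq> \<Union>\<F>"
    by (intro exI[of _ "insert U0 \<F>"]) auto
qed

lemma first_countable_shrinking_base:
  assumes "first_countable T" "x \<in> topspace T"
  obtains B :: "nat \<Rightarrow> 'a set" where "\<And>n. openin T (B n)" "\<And>n. x \<in> B n"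
    "\<And>U. openin T U \<Longrightarrow> x \<in> U \<Longrightarrow> \<exists>N. \<forall>k\<ge>N. B k \<subseteq> U"
proof -
  obtain \<B> where \<B>: "countable \<B>" "\<forall>V\<in>\<B>. openin T V"
    "\<forall>U. openin T U \<and> x \<in> U \<longrightarrow> (\<exists>V\<in>\<B>. x \<in> V \<and> V \<subseteq> U)"
    using assms unfolding first_countable_def by metis
  define \<B>' where "\<B>' = {V \<in> \<B>. x \<in> V}"
  have "\<B>' \<noteq> {}" using \<B>(3) assms(2) unfolding \<B>'_def by fastforce
  then have range: "range (from_nat_into \<B>') = \<B>'"
    using \<B>(1) by (simp add: \<B>'_def range_from_nat_into)
  define B where "B n = (\<Inter>j\<le>n. from_nat_into \<B>' j)" for n
  show ?thesis
  proof
    have "openin T (from_nat_into \<B>' j) \<and> x \<in> from_nat_into \<B>' j" for j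
      using range \<B>(2) unfolding \<B>'_def by blast
    then show "openin T (B n)" "x \<in> B n" for n unfolding B_def by auto
  next
    fix U assume "openin T U" "x \<in> U"
    then obtain V where "V \<in> \<B>'" "V \<subseteq> U" using \<B>(3) unfolding \<B>'_def by blast
    then obtain N where "from_nat_into \<B>' N \<subseteq> U" using range by (metis rangeE)
    then show "\<exists>N. \<forall>k\<ge>N. B k \<subseteq> U" unfolding B_def by auto
  qed
qed

lemma nhdsin_inf_principal_neq_bot:
  assumes "x \<in> T closure_of D"
  shows "inf (nhdsin T x) (principal D) \<noteq> bot"
proof
  assume "inf (nhdsin T x) (principal D) = bot"
  then have "eventually (\<lambda>_. False) (inf (nhdsin T x) (principal D))" by simp
  with assms show False
    by (auto simp: eventually_inf_principal eventually_nhdsin in_closure_of)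
qed

lemma tendsto_nhdsin_inf_principal:
  assumes f: "continuous_map (subtopology T D) euclidean f" and x: "x \<in> topspace T" "x \<in> D"
  shows "(f \<longlongrightarrow> f x) (inf (nhdsin T x) (principal D))"
proof (rule topological_tendstoI)
  fix W assume "open W" "f x \<in> W"
  then have "openin (subtopology T D) {y \<in> topspace (subtopology T D). f y \<in> W}"
    using openin_continuous_map_preimage[OF f] by simp
  then obtain U where "openin T U" "{y \<in> topspace T \<inter> D. f y \<in> W} = U \<inter> D"
    unfolding openin_subtopology by auto
  with x \<open>f x \<in> W\<close> show "eventually (\<lambda>y. f y \<in> W) (inf (nhdsin T x) (principal D))"
    unfolding eventually_inf_principal eventually_nhdsin by blast
qed

lemma continuous_map_dense_limit:
  fixes f h :: "'a \<Rightarrow> 'b::metric_space"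
  assumes dense: "T closure_of D = topspace T"
    and lim: "\<And>x. x \<in> topspace T \<Longrightarrow> (f \<longlongrightarrow> h x) (inf (nhdsin T x) (principal D))"
  shows "continuous_map T euclidean h"
  unfolding continuous_map_def
proof (intro conjI allI impI)
  show "h \<in> topspace T \<rightarrow> topspace euclidean" by simp
  fix V :: "'b set" assume "openin euclidean V"
  then have V: "open V" by simp
  show "openin T {x \<in> topspace T. h x \<in> V}"
  proof (subst openin_subopen, intro ballI)
    fix x assume "x \<in> {x \<in> topspace T. h x \<in> V}"
    then have x: "x \<in> topspace T" "h x \<in> V" by auto
    then obtain r where r: "r > 0" "ball (h x) r \<subseteq> V" using V open_contains_ball by blast
    have "eventually (\<lambda>y. dist (f y) (h x) < r/2) (inf (nhdsin T x) (principal D))"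
      by (rule tendstoD[OF lim[OF x(1)]]) (use r in simp)
    then obtain U where U: "openin T U" "x \<in> U" "\<And>y. y \<in> U \<Longrightarrow> y \<in> D \<Longrightarrow> dist (f y) (h x) < r/2"
      using x unfolding eventually_inf_principal eventually_nhdsin by blast
    have "h y \<in> V" if y: "y \<in> U" for y
    proof -
      have yT: "y \<in> topspace T" using U(1) y openin_subset by blast
      have "\<forall>z\<in>U. z \<in> D \<longrightarrow> dist (h x) (f z) \<le> r/2"
        using U(3) by (simp add: dist_commute less_imp_le)
      then have ev: "eventually (\<lambda>z. dist (h x) (f z) \<le> r/2) (inf (nhdsin T y) (principal D))"
        unfolding eventually_inf_principal eventually_nhdsin using U(1) y by blast
      have "inf (nhdsin T y) (principal D) \<noteq> bot"
        using nhdsin_inf_principal_neq_bot[of y T D] dense yT by simp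
      then have "dist (h x) (h y) \<le> r/2"
        using Lim_dist_ubound[OF _ lim[OF yT] ev] by (simp add: trivial_limit_def)
      then show ?thesis using r by auto
    qed
    moreover have "U \<subseteq> topspace T" using openin_subset[OF U(1)] .
    ultimately show "\<exists>U. openin T U \<and> x \<in> U \<and> U \<subseteq> {x \<in> topspace T. h x \<in> V}"
      using U(1,2) by blast
  qed
qed

lemma continuous_map_mult_euclidean:
  fixes f g :: "'a \<Rightarrow> 'b::real_normed_algebra"
  assumes "continuous_map T euclidean f" "continuous_map T euclidean g"
  shows "continuous_map T euclidean (\<lambda>x. f x * g x)"
  using assms by (auto simp: continuous_map_atin intro!: tendsto_mult)

lemma continuous_map_cnj:
  assumes "continuous_map T euclidean f"
  shows "continuous_map T euclidean (\<lambda>x. cnj (f x))"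
  using assms by (auto simp: continuous_map_atin intro!: tendsto_cnj)

lemma characters_norm:
  assumes "\<phi> \<in> characters T H" "x \<in> topspace T"
  shows "cmod (\<phi> x) = 1"
  using assms continuous_map_image_subset_topspace unfolding characters_def by fastforce

lemma characters_one:
  assumes "monoid H" "topspace T = carrier H" "\<phi> \<in> characters T H"
  shows "\<phi> \<one>\<^bsub>H\<^esub> = 1"
proof -
  have "\<phi> (\<one>\<^bsub>H\<^esub> \<otimes>\<^bsub>H\<^esub> \<one>\<^bsub>H\<^esub>) = \<phi> \<one>\<^bsub>H\<^esub> * \<phi> \<one>\<^bsub>H\<^esub>"
    using assms(3) monoid.one_closed[OF assms(1)] by (simp add: characters_def)
  then have "\<phi> \<one>\<^bsub>H\<^esub> = \<phi> \<one>\<^bsub>H\<^esub> * \<phi> \<one>\<^bsub>H\<^esub>"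
    using monoid.l_one[OF assms(1) monoid.one_closed[OF assms(1)]] by simp
  moreover have "\<phi> \<one>\<^bsub>H\<^esub> \<noteq> 0"
    using characters_norm[OF assms(3)] assms(1,2) monoid.one_closed by fastforce
  ultimately show ?thesis by simp
qed

lemma characters_pow:
  assumes "monoid H" "topspace T = carrier H" "\<phi> \<in> characters T H" "x \<in> carrier H"
  shows "\<phi> (x [^]\<^bsub>H\<^esub> (m::nat)) = \<phi> x ^ m"
proof (induction m)
  case 0
  then show ?case using characters_one[OF assms(1-3)] by simp
next
  case (Suc m)
  have "\<phi> (x [^]\<^bsub>H\<^esub> m \<otimes>\<^bsub>H\<^esub> x) = \<phi> (x [^]\<^bsub>H\<^esub> m) * \<phi> x"
    using assms by (simp add: characters_def monoid.nat_pow_closed)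
  with Suc show ?case by (simp add: mult.commute)
qed

lemma characters_mult_cnj:
  assumes "\<phi> \<in> characters T H" "\<eta> \<in> characters T H"
  shows "(\<lambda>x. \<phi> x * cnj (\<eta> x)) \<in> characters T H"
proof -
  have "continuous_map T euclidean (\<lambda>x. \<phi> x * cnj (\<eta> x))"
    using assms
    by (intro continuous_map_mult_euclidean continuous_map_cnj)
      (auto simp: characters_def continuous_map_in_subtopology)
  moreover have "cmod (\<phi> x * cnj (\<eta> x)) = 1" if "x \<in> topspace T" for x
    using characters_norm[OF assms(1) that] characters_norm[OF assms(2) that]
    by (simp add: norm_mult)
  ultimately show ?thesis
    using assms by (auto simp: characters_def continuous_map_in_subtopology)
qed

locale topological_abelian_group =
  fixes S :: "'a topology" and G :: "('a, 'b) monoid_scheme" (structure)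
  assumes topological_comm_group: "topological_comm_group S G"
begin

sublocale comm_group G
  using topological_comm_group by (simp add: topological_comm_group_def)

lemma topspace_eq_carrier [simp]: "topspace S = carrier G"
  using topological_comm_group by (simp add: topological_comm_group_def)

lemma continuous_map_group_mult:
  assumes "continuous_map T S f" "continuous_map T S g"
  shows "continuous_map T S (\<lambda>x. f x \<otimes> g x)"
proof -
  have "continuous_map T (prod_topology S S) (\<lambda>x. (f x, g x))"
    using assms by (simp add: continuous_map_paired)
  moreover have "continuous_map (prod_topology S S) S (\<lambda>(x, y). x \<otimes> y)"
    using topological_comm_group by (simp add: topological_comm_group_def)
  ultimately show ?thesis using continuous_map_compose by (fastforce simp: comp_def)
qed

lemma continuous_map_group_inv:
  assumes "continuous_map T S f"
  shows "continuous_map T S (\<lambda>x. inv (f x))"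
proof -
  have "continuous_map S S (\<lambda>x. inv x)"
    using topological_comm_group by (simp add: topological_comm_group_def)
  then show ?thesis using continuous_map_compose[OF assms] by (simp add: comp_def)
qed

lemma continuous_map_group_pow:
  assumes "continuous_map T S f"
  shows "continuous_map T S (\<lambda>x. f x [^] (m::nat))"
  by (induction m) (simp_all add: assms continuous_map_group_mult)

lemma quotient_powers_neighbourhood:
  fixes M :: nat
  assumes "openin S B" "\<one> \<in> B" "z \<in> carrier G"
  obtains W where "openin S W" "z \<in> W"
    "\<And>a b m. a \<in> W \<Longrightarrow> b \<in> W \<Longrightarrow> m \<le> M \<Longrightarrow> (a \<otimes> inv b) [^] m \<in> B"
proof -
  define Q where "Q = (\<Inter>m\<le>M. {p \<in> topspace (prod_topology S S). (fst p \<otimes> inv snd p) [^] m \<in> B})"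
  have "continuous_map (prod_topology S S) S (\<lambda>p. fst p \<otimes> inv snd p)"
    by (intro continuous_map_group_mult continuous_map_group_inv
        continuous_map_fst continuous_map_snd)
  then have "continuous_map (prod_topology S S) S (\<lambda>p. (fst p \<otimes> inv snd p) [^] m)" for m :: nat
    by (rule continuous_map_group_pow)
  then have "openin (prod_topology S S) Q"
    unfolding Q_def using assms(1) by (intro openin_INT2 openin_continuous_map_preimage) auto
  moreover have "(z, z) \<in> Q" using assms by (simp add: Q_def)
  ultimately obtain U1 U2 where U: "openin S U1" "openin S U2" "z \<in> U1" "z \<in> U2" "U1 \<times> U2 \<subseteq> Q"
    unfolding openin_prod_topology_alt by meson
  show ?thesis
  proof
    show "openin S (U1 \<inter> U2)" "z \<in> U1 \<inter> U2" using U by auto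
    fix a b m assume "a \<in> U1 \<inter> U2" "b \<in> U1 \<inter> U2" "m \<le> M"
    with U(5) show "(a \<otimes> inv b) [^] m \<in> B" by (auto simp: Q_def)
  qed
qed

lemma shrinking_quotient_powers_neighbourhoods:
  fixes M :: "nat \<Rightarrow> nat" and B :: "nat \<Rightarrow> 'a set"
  assumes B: "\<And>k. openin S (B k)" "\<And>k. \<one> \<in> B k"
  obtains V where "\<And>k. openin S (V k)" "\<And>k. \<one> \<in> V k" "\<And>k. V k \<subseteq> B k"
    "\<And>j k. j \<le> k \<Longrightarrow> V k \<subseteq> V j"
    "\<And>k a b m. a \<in> V k \<Longrightarrow> b \<in> V k \<Longrightarrow> m \<le> M k \<Longrightarrow> (a \<otimes> inv b) [^] m \<in> B k"
proof -
  have "\<forall>k. \<exists>W. openin S W \<and> \<one> \<in> W \<and> (\<forall>a\<in>W. \<forall>b\<in>W. \<forall>m\<le>M k. (a \<otimes> inv b) [^] m \<in> B k)"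
  proof
    fix k
    obtain W where "openin S W" "\<one> \<in> W"
      "\<And>a b m. a \<in> W \<Longrightarrow> b \<in> W \<Longrightarrow> m \<le> M k \<Longrightarrow> (a \<otimes> inv b) [^] m \<in> B k"
      by (fact quotient_powers_neighbourhood[OF B(1)[of k] B(2)[of k] one_closed, where M="M k"])
    then show "\<exists>W. openin S W \<and> \<one> \<in> W \<and> (\<forall>a\<in>W. \<forall>b\<in>W. \<forall>m\<le>M k. (a \<otimes> inv b) [^] m \<in> B k)"
      by blast
  qed
  from choice[OF this] obtain W where "\<forall>k. openin S (W k) \<and> \<one> \<in> W k \<and>
      (\<forall>a\<in>W k. \<forall>b\<in>W k. \<forall>m\<le>M k. (a \<otimes> inv b) [^] m \<in> B k)"
    by blast
  then have W: "\<And>k. openin S (W k)" "\<And>k. \<one> \<in> W k"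
    "\<And>k a b m. a \<in> W k \<Longrightarrow> b \<in> W k \<Longrightarrow> m \<le> M k \<Longrightarrow> (a \<otimes> inv b) [^] m \<in> B k"
    by simp_all
  define V where "V k = (\<Inter>j\<le>k. W j \<inter> B j)" for k
  show ?thesis
  proof
    show "openin S (V k)" for k
      unfolding V_def using W(1) B(1) by (intro openin_INT2) auto
    show "\<one> \<in> V k" "V k \<subseteq> B k" for k
      unfolding V_def using W(2) B(2) by auto
    show "V k \<subseteq> V j" if "j \<le> k" for j k
      unfolding V_def using that by auto
    show "(a \<otimes> inv b) [^] m \<in> B k" if "a \<in> V k" "b \<in> V k" "m \<le> M k" for k a b m
    proof (rule W(3))
      show "a \<in> W k" "b \<in> W k" using that(1,2) by (auto simp: V_def)
    qed (fact that(3))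
  qed
qed

lemma quotient_of_translates:
  assumes "a \<in> carrier G" "b \<in> carrier G" "x \<in> carrier G"
  shows "(inv b \<otimes> x) \<otimes> inv (inv a \<otimes> x) = a \<otimes> inv b"
proof -
  have "(inv b \<otimes> x) \<otimes> inv (inv a \<otimes> x) = inv b \<otimes> (x \<otimes> inv x) \<otimes> a"
    using assms by (simp add: inv_mult_group m_assoc) (simp add: m_assoc[symmetric])
  also have "\<dots> = a \<otimes> inv b" using assms by (simp add: m_comm)
  finally show ?thesis .
qed

lemma characters_norm_minus_one_lt_if_powers:
  assumes g: "g \<in> characters S G" and l: "l \<in> carrier G" and M: "M \<ge> 1"
    and near: "\<And>m. m \<in> {1..M} \<Longrightarrow> cmod (g (l [^] m) - 1) < 1"
  shows "cmod (g l - 1) < 2 / real M"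
proof (rule norm_minus_one_lt_if_powers_near_one[OF _ M])
  show "cmod (g l) = 1" using characters_norm[OF g] l by simp
  show "cmod (g l ^ m - 1) < 1" if "m \<in> {1..M}" for m
    using near[OF that] characters_pow[OF is_monoid _ g l] by simp
qed

lemma characters_norm_minus_one_le_of_approximants:
  assumes g: "g \<in> characters S G" and x: "x \<in> carrier G" and a: "\<And>k. a k \<in> carrier G"
    and approx: "\<And>U. openin S U \<Longrightarrow> \<one> \<in> U \<Longrightarrow> \<exists>k. inv (a k) \<otimes> x \<in> U"
    and bound: "\<And>k. cmod (g (a k) - 1) \<le> c"
  shows "cmod (g x - 1) \<le> c"
proof (rule field_le_epsilon)
  fix e :: real assume e: "e > 0"
  have cont: "continuous_map S circle_top g"
    and mult: "\<And>y z. y \<in> carrier G \<Longrightarrow> z \<in> carrier G \<Longrightarrow> g (y \<otimes> z) = g y * g z"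
    using g by (auto simp: characters_def)
  define U where "U = {v \<in> topspace S. g v \<in> sphere 0 1 \<inter> ball 1 e}"
  have "openin S U"
    unfolding U_def by (rule openin_continuous_map_preimage[OF cont]) (simp add: openin_open_Int)
  moreover have "\<one> \<in> U" using characters_one[OF is_monoid _ g] e by (simp add: U_def)
  ultimately obtain k where k: "inv (a k) \<otimes> x \<in> U" using approx by blast
  define v where "v = inv (a k) \<otimes> x"
  have v: "v \<in> carrier G" "cmod (g v - 1) < e"
    using k a x by (auto simp: v_def U_def dist_norm norm_minus_commute)
  have "x = a k \<otimes> v" using a x by (simp add: v_def m_assoc[symmetric])
  then have "cmod (g x - 1) = cmod (g (a k) * g v - 1)" using mult a v(1) by simp
  also have "\<dots> \<le> cmod (g (a k) - 1) + cmod (g v - 1)"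
    using norm_mult_minus_one_le characters_norm[OF g] v(1) by simp
  finally show "cmod (g x - 1) \<le> c + e" using bound[of k] v(2) by linarith
qed

lemma characters_norm_minus_one_le_along_chain:
  assumes g: "g \<in> characters S G" and a: "\<And>k. a k \<in> carrier G"
    and steps: "\<And>k. cmod (g (a (Suc k) \<otimes> inv (a k)) - 1) \<le> c k"
  shows "cmod (g (a n) - 1) \<le> cmod (g (a 0) - 1) + (\<Sum>k<n. c k)"
proof -
  define u where "u k = g (a (Suc k) \<otimes> inv (a k))" for k
  have mult: "g (y \<otimes> z) = g y * g z" if "y \<in> carrier G" "z \<in> carrier G" for y z
    using g that by (simp add: characters_def)
  have "g (a (Suc k)) = u k * g (a k)" for k
  proof -
    have "(a (Suc k) \<otimes> inv (a k)) \<otimes> a k = a (Suc k)" using a by (simp add: m_assoc)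
    then show ?thesis unfolding u_def using mult[of "a (Suc k) \<otimes> inv (a k)" "a k"] a by simp
  qed
  then have "cmod (g (a n) - 1) \<le> cmod (g (a 0) - 1) + (\<Sum>k<n. cmod (u k - 1))"
    using characters_norm[OF g] a by (intro norm_minus_one_le_telescoping) simp_all
  also have "\<dots> \<le> cmod (g (a 0) - 1) + (\<Sum>k<n. c k)"
    using steps by (intro add_left_mono sum_mono) (simp add: u_def)
  finally show ?thesis .
qed

end

section \<open>Extending characters from a dense subgroup\<close>

text \<open>Lim is an arbitrary value on the trivial filter; density of D is what makes the filter
  below proper (nhdsin_inf_principal_neq_bot).\<close>
definition extend_char :: "'a topology \<Rightarrow> 'a set \<Rightarrow> ('a \<Rightarrow> complex) \<Rightarrow> 'a \<Rightarrow> complex" where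
  "extend_char S D \<psi> x = (if x \<in> topspace S then Lim (inf (nhdsin S x) (principal D)) \<psi> else 1)"

locale dense_subgroup = topological_abelian_group +
  fixes D :: "'a set"
  assumes subgroup_D: "subgroup D G" and dense_D: "S closure_of D = topspace S"
begin

abbreviation characters_D :: "('a \<Rightarrow> complex) set" where
  "characters_D \<equiv> characters (subtopology S D) (G\<lparr>carrier := D\<rparr>)"

abbreviation dual_D :: "('a \<Rightarrow> complex) topology" where
  "dual_D \<equiv> dual_top (subtopology S D) (G\<lparr>carrier := D\<rparr>)"

lemma D_subset_carrier: "D \<subseteq> carrier G"
  using subgroup_D subgroup.subset by blast

lemma topspace_subtopology_D [simp]: "topspace (subtopology S D) = D"
  using D_subset_carrier by auto

lemma characters_D_iff:
  "\<psi> \<in> characters_D \<longleftrightarrow>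
     continuous_map (subtopology S D) circle_top \<psi> \<and>
     (\<forall>x\<in>D. \<forall>y\<in>D. \<psi> (x \<otimes> y) = \<psi> x * \<psi> y) \<and> (\<forall>x. x \<notin> D \<longrightarrow> \<psi> x = 1)"
  unfolding characters_def topspace_subtopology_D by simp

lemma characters_D_one:
  assumes "\<psi> \<in> characters_D"
  shows "\<psi> \<one> = 1"
proof -
  have "monoid (G\<lparr>carrier := D\<rparr>)"
    using group.is_monoid subgroup.subgroup_is_group[OF subgroup_D is_group] by blast
  then show ?thesis using characters_one[OF _ _ assms] D_subset_carrier by (simp add: Int_absorb1)
qed

lemma characters_D_uniformly_continuous:
  assumes \<psi>: "\<psi> \<in> characters_D" and e: "e > 0"
  obtains W where "openin S W" "\<one> \<in> W"
    "\<And>a b. a \<in> D \<Longrightarrow> b \<in> D \<Longrightarrow> a \<otimes> inv b \<in> W \<Longrightarrow> dist (\<psi> a) (\<psi> b) < e"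
proof -
  have cont: "continuous_map (subtopology S D) circle_top \<psi>"
    and mult: "\<And>a b. a \<in> D \<Longrightarrow> b \<in> D \<Longrightarrow> \<psi> (a \<otimes> b) = \<psi> a * \<psi> b"
    using \<psi> by (simp_all add: characters_D_iff)
  have "openin (subtopology S D)
      {a \<in> topspace (subtopology S D). \<psi> a \<in> sphere 0 1 \<inter> ball 1 e}"
    by (rule openin_continuous_map_preimage[OF cont]) (simp add: openin_open_Int)
  then obtain W where W: "openin S W" "{a \<in> D. \<psi> a \<in> sphere 0 1 \<inter> ball 1 e} = W \<inter> D"
    unfolding openin_subtopology topspace_subtopology_D by blast
  show ?thesis
  proof
    show "openin S W" by (fact W(1))
    have "\<one> \<in> {a \<in> D. \<psi> a \<in> sphere 0 1 \<inter> ball 1 e}"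
      using characters_D_one[OF \<psi>] e subgroup.one_closed[OF subgroup_D] by simp
    then show "\<one> \<in> W" unfolding W(2) by blast
    fix a b assume ab: "a \<in> D" "b \<in> D" "a \<otimes> inv b \<in> W"
    have abG: "a \<in> carrier G" "b \<in> carrier G" using ab D_subset_carrier by auto
    have cD: "a \<otimes> inv b \<in> D"
      using ab subgroup_D by (simp add: subgroup.m_closed subgroup.m_inv_closed)
    then have "a \<otimes> inv b \<in> {a \<in> D. \<psi> a \<in> sphere 0 1 \<inter> ball 1 e}"
      unfolding W(2) using ab(3) by blast
    then have close: "dist 1 (\<psi> (a \<otimes> inv b)) < e" by simp
    have "\<psi> a = \<psi> (a \<otimes> inv b) * \<psi> b"
      using mult[OF cD ab(2)] abG by (simp add: m_assoc)
    then have "dist (\<psi> a) (\<psi> b) = cmod ((\<psi> (a \<otimes> inv b) - 1) * \<psi> b)"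
      by (simp add: dist_norm algebra_simps)
    also have "\<dots> = dist 1 (\<psi> (a \<otimes> inv b))"
      using characters_norm[OF \<psi>, of b] ab(2) abG(2)
      by (simp add: norm_mult dist_norm norm_minus_commute)
    finally show "dist (\<psi> a) (\<psi> b) < e" using close by simp
  qed
qed

text \<open>By uniform continuity, \<psi> maps the trace on D of the neighbourhood filter of x to a
  Cauchy filter, which converges because C is complete.\<close>
lemma characters_D_convergent:
  assumes \<psi>: "\<psi> \<in> characters_D" and x: "x \<in> carrier G"
  obtains l where "(\<psi> \<longlongrightarrow> l) (inf (nhdsin S x) (principal D))"
proof -
  have "cauchy_filter (filtermap \<psi> (inf (nhdsin S x) (principal D)))"
    unfolding cauchy_filter_metric_filtermap
  proof (intro allI impI)
    fix e :: real assume "e > 0"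
    then obtain W where W: "openin S W" "\<one> \<in> W"
      and close: "\<And>a b. a \<in> D \<Longrightarrow> b \<in> D \<Longrightarrow> a \<otimes> inv b \<in> W \<Longrightarrow> dist (\<psi> a) (\<psi> b) < e"
      using characters_D_uniformly_continuous[OF \<psi>] by blast
    obtain V where V: "openin S V" "x \<in> V"
      and quot: "\<And>a b m::nat. a \<in> V \<Longrightarrow> b \<in> V \<Longrightarrow> m \<le> 1 \<Longrightarrow> (a \<otimes> inv b) [^] m \<in> W"
      using quotient_powers_neighbourhood[OF W x, where M=1] by blast
    show "\<exists>P. eventually P (inf (nhdsin S x) (principal D)) \<and>
        (\<forall>a b. P a \<and> P b \<longrightarrow> dist (\<psi> a) (\<psi> b) < e)"
    proof (intro exI conjI allI impI)
      show "eventually (\<lambda>a. a \<in> V \<and> a \<in> D) (inf (nhdsin S x) (principal D))"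
        unfolding eventually_inf_principal eventually_nhdsin using V by blast
      fix a b assume ab: "(a \<in> V \<and> a \<in> D) \<and> (b \<in> V \<and> b \<in> D)"
      then have "(a \<otimes> inv b) [^] Suc 0 \<in> W" by (intro quot) auto
      moreover have "a \<in> carrier G" "b \<in> carrier G" using ab D_subset_carrier by auto
      ultimately have "a \<otimes> inv b \<in> W" by simp
      with ab show "dist (\<psi> a) (\<psi> b) < e" by (intro close) auto
    qed
  qed
  then obtain l where "filtermap \<psi> (inf (nhdsin S x) (principal D)) \<le> nhds l"
    using cauchy_filter_convergent convergent_filter_iff by blast
  then show ?thesis using that unfolding filterlim_def by blast
qed

lemma extend_char_eqI:
  assumes "x \<in> carrier G" "(\<psi> \<longlongrightarrow> l) (inf (nhdsin S x) (principal D))"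
  shows "extend_char S D \<psi> x = l"
proof -
  have "inf (nhdsin S x) (principal D) \<noteq> bot"
    using nhdsin_inf_principal_neq_bot[of x S D] dense_D assms(1) by simp
  then show ?thesis using tendsto_Lim assms by (simp add: extend_char_def trivial_limit_def)
qed

lemma tendsto_extend_char:
  assumes "\<psi> \<in> characters_D" "x \<in> carrier G"
  shows "(\<psi> \<longlongrightarrow> extend_char S D \<psi> x) (inf (nhdsin S x) (principal D))"
  using characters_D_convergent[OF assms] extend_char_eqI[OF assms(2)] by metis

lemma extend_char_eq:
  assumes \<psi>: "\<psi> \<in> characters_D" and x: "x \<in> D"
  shows "extend_char S D \<psi> x = \<psi> x"
proof (rule extend_char_eqI)
  show "x \<in> carrier G" using x D_subset_carrier by blast
  have "continuous_map (subtopology S D) euclidean \<psi>"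
    using \<psi> by (simp add: characters_D_iff continuous_map_in_subtopology)
  then show "(\<psi> \<longlongrightarrow> \<psi> x) (inf (nhdsin S x) (principal D))"
    by (rule tendsto_nhdsin_inf_principal) (use \<open>x \<in> carrier G\<close> x in simp_all)
qed

lemma continuous_map_extend_char:
  assumes \<psi>: "\<psi> \<in> characters_D"
  shows "continuous_map S circle_top (extend_char S D \<psi>)"
  unfolding continuous_map_in_subtopology
proof
  show "continuous_map S euclidean (extend_char S D \<psi>)"
    by (rule continuous_map_dense_limit[OF dense_D]) (use tendsto_extend_char[OF \<psi>] in simp)
  show "extend_char S D \<psi> \<in> topspace S \<rightarrow> sphere 0 1"
  proof
    fix x assume "x \<in> topspace S"
    then have x: "x \<in> carrier G" by simp
    have "eventually (\<lambda>a. \<psi> a \<in> sphere 0 1) (inf (nhdsin S x) (principal D))"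
      unfolding eventually_inf_principal eventually_nhdsin
      using x characters_norm[OF \<psi>] D_subset_carrier by (auto intro!: exI[of _ "topspace S"])
    moreover have "inf (nhdsin S x) (principal D) \<noteq> bot"
      using nhdsin_inf_principal_neq_bot[of x S D] dense_D x by simp
    ultimately show "extend_char S D \<psi> x \<in> sphere 0 1"
      using Lim_in_closed_set[OF closed_sphere] tendsto_extend_char[OF \<psi> x] by blast
  qed
qed

text \<open>Multiplicativity passes from D to the closure one variable at a time: two continuous
  functions agreeing on the dense set D agree everywhere.\<close>
lemma extend_char_mult:
  assumes \<psi>: "\<psi> \<in> characters_D"
    and x: "x \<in> carrier G" and y: "y \<in> carrier G"
  shows "extend_char S D \<psi> (x \<otimes> y) = extend_char S D \<psi> x * extend_char S D \<psi> y"
proof -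
  define e where "e = extend_char S D \<psi>"
  have e: "continuous_map S euclidean e"
    using continuous_map_extend_char[OF \<psi>] by (simp add: e_def continuous_map_in_subtopology)
  have D: "e z = \<psi> z" "\<psi> (z \<otimes> w) = \<psi> z * \<psi> w" "z \<otimes> w \<in> D" if "z \<in> D" "w \<in> D" for z w
    using that extend_char_eq[OF \<psi>] \<psi> subgroup_D
    by (auto simp: e_def characters_D_iff subgroup.m_closed)
  have translate:
      "continuous_map S euclidean (\<lambda>z. e (z \<otimes> w))" "continuous_map S euclidean (\<lambda>z. e (w \<otimes> z))"
    if "w \<in> carrier G" for w
  proof -
    have "continuous_map S S (\<lambda>z. z)" using continuous_map_id by (simp add: id_def)
    then have "continuous_map S S (\<lambda>z. z \<otimes> w)" "continuous_map S S (\<lambda>z. w \<otimes> z)"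
      using that by (auto intro!: continuous_map_group_mult)
    from continuous_map_compose[OF this(1) e] continuous_map_compose[OF this(2) e]
    show "continuous_map S euclidean (\<lambda>z. e (z \<otimes> w))" "continuous_map S euclidean (\<lambda>z. e (w \<otimes> z))"
      by (simp_all add: comp_def)
  qed
  have closure: "z \<in> S closure_of D" if "z \<in> carrier G" for z
    using that dense_D by simp
  have right_D: "e (z \<otimes> w) = e z * e w" if z: "z \<in> carrier G" and w: "w \<in> D" for z w
  proof (rule forall_in_closure_of_eq[OF closure[OF z] Hausdorff_space_euclidean])
    show "continuous_map S euclidean (\<lambda>z. e (z \<otimes> w))" using translate w D_subset_carrier by blast
    show "continuous_map S euclidean (\<lambda>z. e z * e w)"
      using e by (intro continuous_map_mult_euclidean) auto
    show "e (a \<otimes> w) = e a * e w" if "a \<in> D" for a using D that w by simp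
  qed
  show ?thesis
    unfolding e_def[symmetric]
  proof (rule forall_in_closure_of_eq[OF closure[OF y] Hausdorff_space_euclidean])
    show "continuous_map S euclidean (\<lambda>z. e (x \<otimes> z))" using translate x by blast
    show "continuous_map S euclidean (\<lambda>z. e x * e z)"
      using e by (intro continuous_map_mult_euclidean) auto
    show "e (x \<otimes> b) = e x * e b" if "b \<in> D" for b using right_D x that by blast
  qed
qed

lemma extend_char_in_characters:
  assumes "\<psi> \<in> characters_D"
  shows "extend_char S D \<psi> \<in> characters S G"
  using continuous_map_extend_char[OF assms] extend_char_mult[OF assms]
  by (simp add: characters_def extend_char_def)

lemma restrict_char_in_characters:
  assumes "\<phi> \<in> characters S G"
  shows "restrict_char D \<phi> \<in> characters_D"
proof -
  have "continuous_map (subtopology S D) circle_top \<phi>"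
    using assms continuous_map_from_subtopology by (auto simp: characters_def)
  then have "continuous_map (subtopology S D) circle_top (restrict_char D \<phi>)"
    by (rule continuous_map_eq) (simp add: restrict_char_def)
  moreover have "\<phi> (x \<otimes> y) = \<phi> x * \<phi> y" if "x \<in> D" "y \<in> D" for x y
    using assms that D_subset_carrier by (auto simp: characters_def)
  ultimately show ?thesis
    using subgroup_D by (simp add: characters_D_iff restrict_char_def subgroup.m_closed)
qed

lemma extend_restrict_char:
  assumes \<phi>: "\<phi> \<in> characters S G"
  shows "extend_char S D (restrict_char D \<phi>) = \<phi>"
proof
  fix x
  have \<psi>: "restrict_char D \<phi> \<in> characters_D"
    by (rule restrict_char_in_characters[OF \<phi>])
  show "extend_char S D (restrict_char D \<phi>) x = \<phi> x"
  proof (cases "x \<in> carrier G")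
    case True
    show ?thesis
    proof (rule forall_in_closure_of_eq[of x S D euclidean])
      show "x \<in> S closure_of D" using True dense_D by simp
      show "continuous_map S euclidean (extend_char S D (restrict_char D \<phi>))"
        using continuous_map_extend_char[OF \<psi>] by (simp add: continuous_map_in_subtopology)
      show "continuous_map S euclidean \<phi>"
        using \<phi> by (simp add: characters_def continuous_map_in_subtopology)
      show "extend_char S D (restrict_char D \<phi>) a = \<phi> a" if "a \<in> D" for a
        using extend_char_eq[OF \<psi> that] that by (simp add: restrict_char_def)
    qed simp
  next
    case False
    then show ?thesis using \<phi> by (simp add: extend_char_def characters_def)
  qed
qed

lemma restrict_extend_char:
  assumes \<psi>: "\<psi> \<in> characters_D"
  shows "restrict_char D (extend_char S D \<psi>) = \<psi>"
  using extend_char_eq[OF \<psi>] \<psi> by (auto simp: restrict_char_def characters_D_iff)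

section \<open>Compact sets controlled by compact subsets of the dense subgroup\<close>

lemma compact_covered_by_translates:
  assumes K: "compactin S K" and V: "openin S V" "\<one> \<in> V"
  obtains F where "finite F" "F \<subseteq> D" "\<And>x. x \<in> K \<Longrightarrow> \<exists>a\<in>F. inv a \<otimes> x \<in> V"
proof -
  define T where "T a = {x \<in> topspace S. inv a \<otimes> x \<in> V}" for a
  have "continuous_map S S (\<lambda>x. inv a \<otimes> x)" if "a \<in> carrier G" for a
    using that continuous_map_id by (intro continuous_map_group_mult) (auto simp: id_def)
  then have "openin S (T a)" if "a \<in> D" for a
    unfolding T_def using that D_subset_carrier V(1)
    by (blast intro: openin_continuous_map_preimage)
  moreover have "K \<subseteq> (\<Union>a\<in>D. T a)"
  proof
    fix x assume "x \<in> K"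
    then have x: "x \<in> carrier G" using K compactin_subset_topspace by fastforce
    have "continuous_map S S (\<lambda>b. inv b \<otimes> x)"
      using x continuous_map_id
      by (intro continuous_map_group_mult continuous_map_group_inv) (auto simp: id_def)
    then have "openin S {b \<in> topspace S. inv b \<otimes> x \<in> V}"
      using V(1) by (rule openin_continuous_map_preimage)
    moreover have "x \<in> {b \<in> topspace S. inv b \<otimes> x \<in> V}" using x V(2) by simp
    moreover have "x \<in> S closure_of D" using dense_D x by simp
    ultimately obtain a where "a \<in> D" "a \<in> {b \<in> topspace S. inv b \<otimes> x \<in> V}"
      by (meson in_closure_of)
    then show "x \<in> (\<Union>a\<in>D. T a)" using x by (auto simp: T_def)
  qed
  ultimately obtain \<F> where \<F>: "finite \<F>" "\<F> \<subseteq> T ` D" "K \<subseteq> \<Union>\<F>"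
    using K[unfolded compactin_def, THEN conjunct2, rule_format, of "T ` D"] by blast
  then obtain F where F: "finite F" "F \<subseteq> D" "K \<subseteq> (\<Union>a\<in>F. T a)"
    using finite_subset_image[OF \<F>(1,2)] by blast
  show ?thesis
  proof (rule that[OF F(1,2)])
    fix x assume "x \<in> K"
    then show "\<exists>a\<in>F. inv a \<otimes> x \<in> V" using F(3) by (auto simp: T_def)
  qed
qed

lemma compact_translate_nets:
  assumes K: "compactin S K" and V: "\<And>k. openin S (V k)" "\<And>k. \<one> \<in> V k"
  obtains F :: "nat \<Rightarrow> 'a set" where "\<And>k. finite (F k)" "\<And>k. F k \<subseteq> D"
    "\<And>x. x \<in> K \<Longrightarrow> \<exists>a. \<forall>k. a k \<in> F k \<and> inv (a k) \<otimes> x \<in> V k"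
proof -
  have "\<forall>k. \<exists>F. finite F \<and> F \<subseteq> D \<and> (\<forall>x\<in>K. \<exists>a\<in>F. inv a \<otimes> x \<in> V k)"
  proof
    fix k
    obtain F where "finite F" "F \<subseteq> D" "\<And>x. x \<in> K \<Longrightarrow> \<exists>a\<in>F. inv a \<otimes> x \<in> V k"
      by (fact compact_covered_by_translates[OF K V(1,2)])
    then show "\<exists>F. finite F \<and> F \<subseteq> D \<and> (\<forall>x\<in>K. \<exists>a\<in>F. inv a \<otimes> x \<in> V k)" by blast
  qed
  from choice[OF this] obtain F
    where F: "\<forall>k. finite (F k) \<and> F k \<subseteq> D \<and> (\<forall>x\<in>K. \<exists>a\<in>F k. inv a \<otimes> x \<in> V k)"
    by blast
  show ?thesis
  proof (rule that)
    show "finite (F k)" "F k \<subseteq> D" for k using F by simp_all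
    fix x assume "x \<in> K"
    then have "\<forall>k. \<exists>a. a \<in> F k \<and> inv a \<otimes> x \<in> V k" using F by blast
    then show "\<exists>a. \<forall>k. a k \<in> F k \<and> inv (a k) \<otimes> x \<in> V k" by (rule choice)
  qed
qed

lemma compact_approximation_chains:
  fixes M :: "nat \<Rightarrow> nat" and B :: "nat \<Rightarrow> 'a set"
  assumes K: "compactin S K" and B: "\<And>k. openin S (B k)" "\<And>k. \<one> \<in> B k"
    and shrink: "\<And>U. openin S U \<Longrightarrow> \<one> \<in> U \<Longrightarrow> \<exists>N. \<forall>k\<ge>N. B k \<subseteq> U"
  obtains L where "compactin S L" "L \<subseteq> D"
    "\<And>x. x \<in> K \<Longrightarrow> \<exists>a. a 0 \<in> L \<and> (\<forall>k. a k \<in> D \<and> inv (a k) \<otimes> x \<in> B k) \<and>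
        (\<forall>k m. m \<le> M k \<longrightarrow> (a (Suc k) \<otimes> inv (a k)) [^] m \<in> L)"
proof -
  obtain V where V: "\<And>k. openin S (V k)" "\<And>k. \<one> \<in> V k" "\<And>k. V k \<subseteq> B k"
    "\<And>j k. j \<le> k \<Longrightarrow> V k \<subseteq> V j"
    and V_pow: "\<And>k a b m. a \<in> V k \<Longrightarrow> b \<in> V k \<Longrightarrow> m \<le> M k \<Longrightarrow> (a \<otimes> inv b) [^] m \<in> B k"
    by (fact shrinking_quotient_powers_neighbourhoods[where B=B and M=M, OF B(1,2)])
  obtain F where F: "\<And>k. finite (F k)" "\<And>k. F k \<subseteq> D"
    and F_chain: "\<And>x. x \<in> K \<Longrightarrow> \<exists>a. \<forall>k. a k \<in> F k \<and> inv (a k) \<otimes> x \<in> V k"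
    by (fact compact_translate_nets[OF K V(1,2)])
  (* Intersecting with B k makes the sets P k shrink to 1, which is what makes L compact. *)
  define P where "P k = {(a \<otimes> inv b) [^] m | a b m. a \<in> F (Suc k) \<and> b \<in> F k \<and> m \<le> M k} \<inter> B k" for k
  define L where "L = F 0 \<union> insert \<one> (\<Union>k. P k)"
  have pow_D: "c [^] m \<in> D" if "c \<in> D" for c and m :: nat
    using that subgroup_D by (induction m) (simp_all add: subgroup.one_closed subgroup.m_closed)
  have P_D: "P k \<subseteq> D" for k
    using F(2) subgroup_D
    by (fastforce simp: P_def intro!: pow_D subgroup.m_closed subgroup.m_inv_closed)
  have "finite (P k)" for k
  proof -
    have "P k \<subseteq> (\<lambda>(a, b, m). (a \<otimes> inv b) [^] m) ` (F (Suc k) \<times> F k \<times> {..M k})"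
      by (force simp: P_def)
    then show ?thesis using F(1) finite_subset by blast
  qed
  moreover have "P k \<subseteq> topspace S" for k using P_D D_subset_carrier by auto
  moreover have "\<exists>N. \<forall>k\<ge>N. P k \<subseteq> U" if "openin S U" "\<one> \<in> U" for U
    using shrink[OF that] by (auto simp: P_def)
  ultimately have "compactin S (insert \<one> (\<Union>k. P k))"
    by (intro compactin_insert_UN_shrinking) auto
  moreover have "compactin S (F 0)"
    using F(1,2) D_subset_carrier by (intro finite_imp_compactin) auto
  ultimately have "compactin S L" unfolding L_def using compactin_Un by blast
  moreover have "L \<subseteq> D"
    unfolding L_def using F(2) P_D subgroup.one_closed[OF subgroup_D] by blast
  moreover have "\<exists>a. a 0 \<in> L \<and> (\<forall>k. a k \<in> D \<and> inv (a k) \<otimes> x \<in> B k) \<and>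
      (\<forall>k m. m \<le> M k \<longrightarrow> (a (Suc k) \<otimes> inv (a k)) [^] m \<in> L)" if x: "x \<in> K" for x
  proof -
    obtain a where a: "\<And>k. a k \<in> F k" "\<And>k. inv (a k) \<otimes> x \<in> V k" using F_chain[OF x] by blast
    have aG: "a k \<in> carrier G" for k using a(1) F(2) D_subset_carrier by blast
    have xG: "x \<in> carrier G" using x compactin_subset_topspace[OF K] by auto
    have "(a (Suc k) \<otimes> inv (a k)) [^] m \<in> L" if m: "m \<le> M k" for k m
    proof -
      have "inv (a (Suc k)) \<otimes> x \<in> V k" using a(2)[of "Suc k"] V(4)[of k "Suc k"] by auto
      then have "((inv (a k) \<otimes> x) \<otimes> inv (inv (a (Suc k)) \<otimes> x)) [^] m \<in> B k"
        using V_pow a(2) m by blast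
      then have "(a (Suc k) \<otimes> inv (a k)) [^] m \<in> P k"
        using a(1) m quotient_of_translates[OF aG aG xG] by (auto simp: P_def)
      then show ?thesis unfolding L_def by blast
    qed
    moreover have "a 0 \<in> L" using a(1) by (simp add: L_def)
    moreover have "a k \<in> D" "inv (a k) \<otimes> x \<in> B k" for k using a F(2) V(3) by blast+
    ultimately show ?thesis by blast
  qed
  ultimately show ?thesis using that by blast
qed

lemma characters_small_on_compact:
  assumes fc: "first_countable S" and K: "compactin S K" and \<epsilon>: "\<epsilon> > 0"
  obtains L \<delta> where "compactin S L" "L \<subseteq> D" "\<delta> > 0"
    "\<And>g x. g \<in> characters S G \<Longrightarrow> (\<And>l. l \<in> L \<Longrightarrow> cmod (g l - 1) < \<delta>) \<Longrightarrow> x \<in> K \<Longrightarrow>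
      cmod (g x - 1) < \<epsilon>"
proof -
  have one: "\<one> \<in> topspace S" by simp
  obtain B :: "nat \<Rightarrow> 'a set" where B: "\<And>k. openin S (B k)" "\<And>k. \<one> \<in> B k"
    and shrink: "\<And>U. openin S U \<Longrightarrow> \<one> \<in> U \<Longrightarrow> \<exists>N. \<forall>k\<ge>N. B k \<subseteq> U"
    by (fact first_countable_shrinking_base[OF fc one])
  have "\<forall>k::nat. \<exists>M. M \<ge> 1 \<and> 2 / real M \<le> \<epsilon> / 2 ^ (k + 3)"
    using \<epsilon> by (intro allI ex_nat_two_div_le) simp
  from choice[OF this] obtain M where "\<forall>k. M k \<ge> 1 \<and> 2 / real (M k) \<le> \<epsilon> / 2 ^ (k + 3)"
    by blast
  then have M: "\<And>k. M k \<ge> 1" "\<And>k. 2 / real (M k) \<le> \<epsilon> / 2 ^ (k + 3)" by simp_all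
  obtain L where L: "compactin S L" "L \<subseteq> D" and chain: "\<And>x. x \<in> K \<Longrightarrow> \<exists>a. a 0 \<in> L \<and>
      (\<forall>k. a k \<in> D \<and> inv (a k) \<otimes> x \<in> B k) \<and> (\<forall>k m. m \<le> M k \<longrightarrow> (a (Suc k) \<otimes> inv (a k)) [^] m \<in> L)"
    using compact_approximation_chains[where M=M, OF K B(1,2) shrink] by blast
  show ?thesis
  proof (rule that[OF L])
    show "min 1 (\<epsilon>/4) > 0" using \<epsilon> by simp
    fix g x assume g: "g \<in> characters S G" and x: "x \<in> K"
      and near: "\<And>l. l \<in> L \<Longrightarrow> cmod (g l - 1) < min 1 (\<epsilon>/4)"
    obtain a where a0: "a 0 \<in> L" and aD: "\<And>k. a k \<in> D" and ax: "\<And>k. inv (a k) \<otimes> x \<in> B k"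
      and steps: "\<And>k m. m \<le> M k \<Longrightarrow> (a (Suc k) \<otimes> inv (a k)) [^] m \<in> L"
      using chain[OF x] by blast
    have aG: "a k \<in> carrier G" for k using aD D_subset_carrier by blast
    have xG: "x \<in> carrier G" using x compactin_subset_topspace[OF K] by auto
    have step_lt: "cmod (g (a (Suc k) \<otimes> inv (a k)) - 1) < 2 / real (M k)" for k
    proof (rule characters_norm_minus_one_lt_if_powers[OF g _ M(1)])
      show "a (Suc k) \<otimes> inv (a k) \<in> carrier G" using aG by simp
      show "cmod (g ((a (Suc k) \<otimes> inv (a k)) [^] m) - 1) < 1" if "m \<in> {1..M k}" for m
        using near[OF steps, of m k] that by simp
    qed
    have "cmod (g (a (Suc k) \<otimes> inv (a k)) - 1) \<le> \<epsilon> / 2 ^ (k + 3)" for k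
      using step_lt[of k] M(2)[of k] by linarith
    then have chain_bound: "cmod (g (a n) - 1) \<le> cmod (g (a 0) - 1) + (\<Sum>k<n. \<epsilon> / 2 ^ (k + 3))" for n
      by (rule characters_norm_minus_one_le_along_chain[OF g aG])
    have a0_bound: "cmod (g (a 0) - 1) < \<epsilon>/4" using near[OF a0] by simp
    have bound: "cmod (g (a n) - 1) \<le> \<epsilon>/2" for n
      using chain_bound[of n] a0_bound sum_div_two_power_le[where c=\<epsilon> and n=n] \<epsilon> by linarith
    have approx: "\<exists>k. inv (a k) \<otimes> x \<in> U" if "openin S U" "\<one> \<in> U" for U
      using shrink[OF that] ax by blast
    have "cmod (g x - 1) \<le> \<epsilon>/2"
      by (rule characters_norm_minus_one_le_of_approximants[OF g xG aG approx bound])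
    then show "cmod (g x - 1) < \<epsilon>" using \<epsilon> by simp
  qed
qed

section \<open>Continuity of restriction and extension\<close>

lemma continuous_map_restrict_char_dual:
  "continuous_map (dual_top S G) dual_D (restrict_char D)"
  unfolding dual_top_def continuous_map_compact_open_iff topspace_compact_open
proof (intro conjI allI impI)
  show "restrict_char D ` characters S G \<subseteq> characters_D"
    using restrict_char_in_characters by blast
  fix K U assume K: "compactin (subtopology S D) K" and U: "openin circle_top U"
  then have "K \<subseteq> D" "compactin S K" by (simp_all add: compactin_subtopology)
  then have "{\<phi> \<in> characters S G. restrict_char D \<phi> ` K \<subseteq> U} = {\<phi> \<in> characters S G. \<phi> ` K \<subseteq> U}"
    by (auto simp: restrict_char_def subset_iff)
  then show "openin (compact_open S circle_top (characters S G))
      {\<phi> \<in> characters S G. restrict_char D \<phi> ` K \<subseteq> U}"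
    using openin_compact_open_basic[OF \<open>compactin S K\<close> U] by simp
qed

lemma extend_char_uniformly_close:
  assumes fc: "first_countable S" and K: "compactin S K" and \<epsilon>: "\<epsilon> > 0"
    and \<psi>0: "\<psi>0 \<in> characters_D"
  obtains N where "openin dual_D N" "\<psi>0 \<in> N"
    "\<And>\<psi> x. \<psi> \<in> N \<Longrightarrow> x \<in> K \<Longrightarrow> dist (extend_char S D \<psi> x) (extend_char S D \<psi>0 x) < \<epsilon>"
proof -
  obtain L \<delta> where L: "compactin S L" "L \<subseteq> D" "\<delta> > 0"
    and small: "\<And>g x. g \<in> characters S G \<Longrightarrow> (\<And>l. l \<in> L \<Longrightarrow> cmod (g l - 1) < \<delta>) \<Longrightarrow> x \<in> K \<Longrightarrow>
      cmod (g x - 1) < \<epsilon>"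
    by (fact characters_small_on_compact[OF fc K \<epsilon>])
  have "continuous_map (subtopology S D) circle_top \<psi>0" using \<psi>0 by (simp add: characters_D_iff)
  moreover have "compactin (subtopology S D) L" using L by (simp add: compactin_subtopology)
  ultimately obtain N where "openin (compact_open (subtopology S D) circle_top characters_D) N"
    "\<psi>0 \<in> N"
    and close: "\<And>\<psi> l. \<psi> \<in> N \<Longrightarrow> l \<in> L \<Longrightarrow> dist (\<psi> l) (\<psi>0 l) < \<delta>"
    by (rule compact_open_uniform_neighbourhood[OF \<psi>0 _ _ L(3)]) (rule that)
  then have N: "openin dual_D N" "\<psi>0 \<in> N"
    by (simp_all add: dual_top_def)
  show ?thesis
  proof (rule that[OF N])
    fix \<psi> x assume \<psi>N: "\<psi> \<in> N" and x: "x \<in> K"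
    have \<psi>: "\<psi> \<in> characters_D"
      using openin_subset[OF N(1)] \<psi>N by (auto simp: dual_top_def)
    define g where "g y = extend_char S D \<psi> y * cnj (extend_char S D \<psi>0 y)" for y
    have g: "g \<in> characters S G"
      unfolding g_def by (intro characters_mult_cnj extend_char_in_characters \<psi> \<psi>0)
    have dist_g: "cmod (g y - 1) = dist (extend_char S D \<psi> y) (extend_char S D \<psi>0 y)"
      if "y \<in> carrier G" for y
      using norm_mult_cnj_minus_one characters_norm[OF extend_char_in_characters[OF \<psi>0]] that
      by (simp add: g_def dist_norm)
    have "cmod (g l - 1) < \<delta>" if "l \<in> L" for l
    proof -
      have "l \<in> D" "l \<in> carrier G" using that L(2) D_subset_carrier by auto
      then have "cmod (g l - 1) = dist (\<psi> l) (\<psi>0 l)"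
        using dist_g extend_char_eq[OF \<psi>] extend_char_eq[OF \<psi>0] by simp
      then show ?thesis using close[OF \<psi>N that] by simp
    qed
    then have "cmod (g x - 1) < \<epsilon>" using small[OF g _ x] by blast
    moreover have "x \<in> carrier G" using x compactin_subset_topspace[OF K] by auto
    ultimately show "dist (extend_char S D \<psi> x) (extend_char S D \<psi>0 x) < \<epsilon>"
      using dist_g by simp
  qed
qed

lemma continuous_map_extend_char_dual:
  assumes fc: "first_countable S"
  shows "continuous_map dual_D (dual_top S G) (extend_char S D)"
  unfolding dual_top_def[of S] continuous_map_compact_open_iff
proof (intro conjI allI impI)
  show "extend_char S D ` topspace dual_D \<subseteq> characters S G"
    using extend_char_in_characters by (auto simp: dual_top_def)
  fix K U assume K: "compactin S K" and U: "openin circle_top U"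
  let ?O = "{\<psi> \<in> topspace dual_D. extend_char S D \<psi> ` K \<subseteq> U}"
  show "openin dual_D ?O"
  proof (subst openin_subopen, intro ballI)
    fix \<psi>0 assume "\<psi>0 \<in> ?O"
    then have \<psi>0: "\<psi>0 \<in> characters_D"
      and \<psi>0K: "extend_char S D \<psi>0 ` K \<subseteq> U" by (auto simp: dual_top_def)
    obtain W where W: "open W" "U = W \<inter> sphere 0 1" using U by (auto simp: openin_subtopology)
    have "compactin circle_top (extend_char S D \<psi>0 ` K)"
      using image_compactin[OF K continuous_map_extend_char[OF \<psi>0]] .
    then have "compact (extend_char S D \<psi>0 ` K)" by (simp add: compactin_subtopology)
    then obtain \<epsilon> where \<epsilon>: "\<epsilon> > 0" "(\<Union>z\<in>extend_char S D \<psi>0 ` K. ball z \<epsilon>) \<subseteq> W"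
      using compact_subset_open_imp_ball_epsilon_subset[OF _ W(1)] \<psi>0K W(2) by blast
    obtain N where N: "openin dual_D N" "\<psi>0 \<in> N"
      and close: "\<And>\<psi> x. \<psi> \<in> N \<Longrightarrow> x \<in> K \<Longrightarrow> dist (extend_char S D \<psi> x) (extend_char S D \<psi>0 x) < \<epsilon>"
      by (fact extend_char_uniformly_close[OF fc K \<epsilon>(1) \<psi>0])
    have "N \<subseteq> ?O"
    proof
      fix \<psi> assume \<psi>N: "\<psi> \<in> N"
      then have \<psi>: "\<psi> \<in> topspace dual_D"
        using openin_subset[OF N(1)] by blast
      have "extend_char S D \<psi> x \<in> U" if "x \<in> K" for x
      proof -
        have "extend_char S D \<psi> x \<in> W"
          using close[OF \<psi>N that] \<epsilon>(2) that by (force simp: dist_commute)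
        moreover have "x \<in> carrier G" using that K compactin_subset_topspace by fastforce
        then have "extend_char S D \<psi> x \<in> sphere 0 1"
          using continuous_map_extend_char \<psi> continuous_map_image_subset_topspace
          by (fastforce simp: dual_top_def)
        ultimately show ?thesis using W(2) by blast
      qed
      with \<psi> show "\<psi> \<in> ?O" by blast
    qed
    with N show "\<exists>T. openin dual_D T \<and> \<psi>0 \<in> T \<and> T \<subseteq> ?O"
      by blast
  qed
qed

end

theorem mainTheorem12:
  fixes S :: "'a topology" and G :: "('a, 'b) monoid_scheme" and D :: "'a set"
  assumes "topological_comm_group S G"
    and "metrizable_space S"
    and "subgroup D G"
    and "S closure_of D = topspace S"
  shows "homeomorphic_map (dual_top S G)
           (dual_top (subtopology S D) (G\<lparr>carrier := D\<rparr>)) (restrict_char D) \<and>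
         (\<forall>\<phi>\<in>characters S G. \<forall>\<eta>\<in>characters S G.
           restrict_char D (\<lambda>x. \<phi> x * \<eta> x) = (\<lambda>x. restrict_char D \<phi> x * restrict_char D \<eta> x))"
proof
  interpret dense_subgroup S G D
    using assms
    by (simp add: dense_subgroup_def dense_subgroup_axioms_def topological_abelian_group_def)
  have "homeomorphic_maps (dual_top S G) (dual_top (subtopology S D) (G\<lparr>carrier := D\<rparr>))
      (restrict_char D) (extend_char S D)"
    unfolding homeomorphic_maps_def
    using continuous_map_restrict_char_dual
      continuous_map_extend_char_dual[OF metrizable_imp_first_countable[OF assms(2)]]
      extend_restrict_char restrict_extend_char
    by (simp add: dual_top_def)
  then show "homeomorphic_map (dual_top S G)
      (dual_top (subtopology S D) (G\<lparr>carrier := D\<rparr>)) (restrict_char D)"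
    using homeomorphic_map_maps by blast
  show "\<forall>\<phi>\<in>characters S G. \<forall>\<eta>\<in>characters S G.
      restrict_char D (\<lambda>x. \<phi> x * \<eta> x) = (\<lambda>x. restrict_char D \<phi> x * restrict_char D \<eta> x)"
    by (simp add: restrict_char_def fun_eq_iff)
qed

end
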